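(* Let $S$ be a topological semigroup with an open right unit, and let $\chi(S)$ be its character. Then the topology of $S$ is generated by a family $\mathcal D$ of left-subinvariant $\overline{\mathsf{dist}}$-continuous quasi-pseudometrics with $|\mathcal D|\le\chi(S)$. If moreover $S$ is semiregular, the quasi-pseudometrics in $\mathcal D$ can additionally be chosen right-continuous.
   Context: A topological semigroup is a topological space with continuous associative multiplication; $e$ is an open right unit if $xe=x$ for all $x$ and $xV$ is a neighborhood of $x$ for every neighborhood $V$ of $e$ and every $x$. $\chi(S)$ is the least cardinal $\kappa$ such that every point has a neighborhood base of cardinality $\le\kappa$. Semiregular: every neighborhood $O_x$ of $x$ contains $\mathrm{int}\,\overline{U_x}$ for some neighborhood $U_x$ of $x$. A quasi-pseudometric is $d:S\times S\to[0,\infty)$ with $d(x,x)=0$ and the triangle inequality; left-subinvariant if $d(zx,zy)\le d(x,y)$ for all $x,y,z$; right-continuous if $y\mapsto d(x,y)$ is continuous for each $x$; $\overline{\mathsf{dist}}$-continuous if for every non-empty $A\subset S$ the function $x\mapsto\inf\{\varepsilon>0:x\in\overline{B_d(A,\varepsilon)}\}$ is continuous, where $B_d(A,\varepsilon)=\{y:\exists a\in A\ d(a,y)<\varepsilon\}$. A family $\mathcal D$ generates the topology if $\{B_d(x,\varepsilon):d\in\mathcal D,x\in S,\varepsilon>0\}$ is a subbase of it, where $B_d(x,\varepsilon)=\{y:d(x,y)<\varepsilon\}$. *)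

theory Defs
  imports "HOL-Analysis.Analysis"
begin

definition topological_semigroup :: "'a::{topological_space,semigroup_mult} itself \<Rightarrow> bool" where
  "topological_semigroup _ \<longleftrightarrow> continuous_on UNIV (\<lambda>p::'a \<times> 'a. fst p * snd p)"

definition is_nbhd :: "'a::topological_space set \<Rightarrow> 'a \<Rightarrow> bool" where
  "is_nbhd V x \<longleftrightarrow> (\<exists>U. open U \<and> x \<in> U \<and> U \<subseteq> V)"

definition open_right_unit :: "'a::{topological_space,semigroup_mult} \<Rightarrow> bool" where
  "open_right_unit e \<longleftrightarrow> (\<forall>x. x * e = x) \<and>
     (\<forall>V x. is_nbhd V e \<longrightarrow> is_nbhd ((\<lambda>v. x * v) ` V) x)"

definition nbhd_base :: "'a::topological_space \<Rightarrow> 'a set set \<Rightarrow> bool" where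
  "nbhd_base x B \<longleftrightarrow> (\<forall>V\<in>B. is_nbhd V x) \<and> (\<forall>W. is_nbhd W x \<longrightarrow> (\<exists>V\<in>B. V \<subseteq> W))"

text \<open>card D \<le> chi(S), where chi(S) is the least cardinal k such that every point has a
  neighbourhood base of cardinality at most k. Since chi(S) is at most the cardinality of
  the power set of S, it is represented by some K :: 'a set set, so the inequality is
  equivalent to: card D \<le> card K for every K bounding the size of some neighbourhood base
  at every point.\<close>
definition card_le_character :: "'b set \<Rightarrow> 'a::topological_space itself \<Rightarrow> bool" where
  "card_le_character D _ \<longleftrightarrow>
     (\<forall>K :: 'a set set. (\<forall>x::'a. \<exists>B. nbhd_base x B \<and> (card_of B, card_of K) \<in> ordLeq)
        \<longrightarrow> (card_of D, card_of K) \<in> ordLeq)"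

definition semiregular :: "'a::topological_space itself \<Rightarrow> bool" where
  "semiregular _ \<longleftrightarrow> (\<forall>(x::'a) W. is_nbhd W x \<longrightarrow>
      (\<exists>U. is_nbhd U x \<and> interior (closure U) \<subseteq> W))"

definition quasi_pseudometric :: "('a \<Rightarrow> 'a \<Rightarrow> real) \<Rightarrow> bool" where
  "quasi_pseudometric d \<longleftrightarrow> (\<forall>x y. d x y \<ge> 0) \<and> (\<forall>x. d x x = 0) \<and>
     (\<forall>x y z. d x z \<le> d x y + d y z)"

definition left_subinvariant :: "('a::semigroup_mult \<Rightarrow> 'a \<Rightarrow> real) \<Rightarrow> bool" where
  "left_subinvariant d \<longleftrightarrow> (\<forall>x y z. d (z * x) (z * y) \<le> d x y)"

definition right_continuous :: "('a::topological_space \<Rightarrow> 'a \<Rightarrow> real) \<Rightarrow> bool" where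
  "right_continuous d \<longleftrightarrow> (\<forall>x. continuous_on UNIV (d x))"

definition qball :: "('a \<Rightarrow> 'a \<Rightarrow> real) \<Rightarrow> 'a \<Rightarrow> real \<Rightarrow> 'a set" where
  "qball d x \<epsilon> = {y. d x y < \<epsilon>}"

definition qball_set :: "('a \<Rightarrow> 'a \<Rightarrow> real) \<Rightarrow> 'a set \<Rightarrow> real \<Rightarrow> 'a set" where
  "qball_set d A \<epsilon> = {y. \<exists>a\<in>A. d a y < \<epsilon>}"

definition closure_dist :: "('a::topological_space \<Rightarrow> 'a \<Rightarrow> real) \<Rightarrow> 'a set \<Rightarrow> 'a \<Rightarrow> real" where
  "closure_dist d A x = Inf {\<epsilon>. \<epsilon> > 0 \<and> x \<in> closure (qball_set d A \<epsilon>)}"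

definition closure_dist_continuous :: "('a::topological_space \<Rightarrow> 'a \<Rightarrow> real) \<Rightarrow> bool" where
  "closure_dist_continuous d \<longleftrightarrow> (\<forall>A. A \<noteq> {} \<longrightarrow> continuous_on UNIV (closure_dist d A))"

definition generates_topology :: "('a::topological_space \<Rightarrow> 'a \<Rightarrow> real) set \<Rightarrow> bool" where
  "generates_topology D \<longleftrightarrow>
     (\<forall>U. open U \<longleftrightarrow> generate_topology {qball d x \<epsilon> | d x \<epsilon>. d \<in> D \<and> \<epsilon> > 0} U)"

end

theory Submission
  imports Defs
begin

text \<open>
  Fix a neighbourhood V of the right unit e and choose open neighbourhoods U 0 \<subseteq> V, U 1, U 2, ...
  of e with U (n+1) U (n+1) U (n+1) \<subseteq> U n. A word x u_1 ... u_k with u_i \<in> U n_i gets the weight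
  \<Sum> 2^-n_i. As in the Birkhoff--Kakutani metrization theorem, splitting a word at half its weight
  shows that a word of weight at most 2^-(m+1) stays inside x U m. Now let d x y be the least weight,
  capped at 1, of a word leading from x to y -- or to within the closure of such endpoints, in the
  semiregular case. Words can be multiplied from the left, so d is left-subinvariant, and appending
  a letter from U n changes d by at most 2^-n; since x U n is a neighbourhood of x, this gives open
  balls, continuity of the closure distances and, for the closure variant, right continuity. One
  such d for every member of a neighbourhood base at e of least cardinality generates the topology,
  and there are at most \<chi>(S) of them.
\<close>

section \<open>General topology\<close>

lemma continuous_on_UNIV_iff_open_level_sets:
  fixes g :: "'a::topological_space \<Rightarrow> real"
  shows "continuous_on UNIV g \<longleftrightarrow> (\<forall>a. open {x. a < g x}) \<and> (\<forall>a. open {x. g x < a})"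
  using continuous_map_upper_lower_semicontinuous_lt[of euclidean g] by simp

lemma open_superlevel_Inf_closed_family:
  fixes C :: "real \<Rightarrow> 'a::topological_space set"
  assumes closed: "\<And>r. closed (C r)" and mono: "\<And>r s. r \<le> s \<Longrightarrow> C r \<subseteq> C s"
    and nonempty: "\<And>x. \<exists>r>0. x \<in> C r"
  shows "open {x. a < Inf {r. 0 < r \<and> x \<in> C r}}"
proof (subst open_subopen, intro ballI)
  let ?f = "\<lambda>x. Inf {r. 0 < r \<and> x \<in> C r}"
  have bdd: "bdd_below {r. 0 < r \<and> x \<in> C r}" for x
    by (rule bdd_belowI[of _ 0]) auto
  fix x assume "x \<in> {x. a < ?f x}"
  then have ax: "a < ?f x" by simp
  show "\<exists>T. open T \<and> x \<in> T \<and> T \<subseteq> {x. a < ?f x}"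
  proof (cases "a < 0")
    case True
    have "0 \<le> ?f y" for y
      using nonempty[of y] by (intro cInf_greatest) auto
    then show ?thesis
      using True by (intro exI[of _ UNIV]) (auto intro: less_le_trans)
  next
    case False
    define c where "c = (a + ?f x) / 2"
    have c: "a < c" "c < ?f x" "0 < c"
      using ax False by (auto simp: c_def)
    have "x \<notin> C c"
      using c cInf_lower[OF _ bdd, of c x] by fastforce
    moreover have "c \<le> ?f y" if "y \<notin> C c" for y
    proof (rule cInf_greatest)
      show "{r. 0 < r \<and> y \<in> C r} \<noteq> {}" using nonempty[of y] by blast
      show "c \<le> r" if "r \<in> {r. 0 < r \<and> y \<in> C r}" for r
        using that \<open>y \<notin> C c\<close> mono[of r c] by force
    qed
    ultimately show ?thesis
      using closed[of c] c(1) by (intro exI[of _ "- C c"]) (auto intro: less_le_trans)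
  qed
qed

lemma continuous_image_closure_subset:
  fixes f :: "'a::topological_space \<Rightarrow> 'b::topological_space"
  assumes "continuous_on UNIV f"
  shows "f ` closure T \<subseteq> closure (f ` T)"
  using assms by (intro image_closure_subset) (auto intro: continuous_on_subset closure_subset[THEN subsetD])

lemma qball_set_mono: "r \<le> s \<Longrightarrow> qball_set d A r \<subseteq> qball_set d A s"
  unfolding qball_set_def by (auto intro: less_le_trans)

lemma exists_radius_closure_qball_set:
  assumes "\<And>x y. d x y \<le> 1" and "A \<noteq> {}"
  shows "\<exists>r>0. y \<in> closure (qball_set d A r)"
proof -
  obtain a where "a \<in> A"
    using \<open>A \<noteq> {}\<close> by blast
  then have "y \<in> qball_set d A 2"
    using assms(1)[of a y] unfolding qball_set_def by (auto intro!: bexI[of _ a])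
  then show ?thesis
    using closure_subset by (intro exI[of _ 2]) auto
qed

lemma generates_topologyI:
  fixes D :: "('a::topological_space \<Rightarrow> 'a \<Rightarrow> real) set"
  assumes open_qball: "\<And>d x r. d \<in> D \<Longrightarrow> open (qball d x r)"
    and zero: "\<And>d x. d \<in> D \<Longrightarrow> d x x = 0"
    and small: "\<And>x W. open W \<Longrightarrow> x \<in> W \<Longrightarrow> \<exists>d\<in>D. \<exists>r>0. qball d x r \<subseteq> W"
  shows "generates_topology D"
  unfolding generates_topology_def
proof (intro allI iffI)
  let ?S = "{qball d x \<epsilon> | d x \<epsilon>. d \<in> D \<and> \<epsilon> > 0}"
  fix W :: "'a set"
  assume "open W"
  have "W = \<Union>{b \<in> ?S. b \<subseteq> W}"
  proof
    show "W \<subseteq> \<Union>{b \<in> ?S. b \<subseteq> W}"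
    proof
      fix x assume "x \<in> W"
      then obtain d r where d: "d \<in> D" "r > 0" "qball d x r \<subseteq> W"
        using small \<open>open W\<close> by blast
      then have "x \<in> qball d x r"
        using zero[OF d(1)] by (simp add: qball_def)
      with d show "x \<in> \<Union>{b \<in> ?S. b \<subseteq> W}"
        by blast
    qed
  qed blast
  moreover have "generate_topology ?S (\<Union>{b \<in> ?S. b \<subseteq> W})"
    by (rule generate_topology.UN) (auto intro: generate_topology.Basis)
  ultimately show "generate_topology ?S W"
    by simp
next
  fix W :: "'a set"
  assume "generate_topology {qball d x \<epsilon> | d x \<epsilon>. d \<in> D \<and> \<epsilon> > 0} W"
  then show "open W"
    by induction (auto intro: open_qball)
qed

text \<open>A neighbourhood base at a single point of least cardinality already bounds the character.\<close>
lemma exists_nbhd_base_card_le_character: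
  fixes x :: "'a::topological_space"
  shows "\<exists>B. nbhd_base x B \<and> (\<forall>f :: 'a set \<Rightarrow> 'b. card_le_character (f ` B) TYPE('a))"
proof -
  have "{V. is_nbhd V x} \<in> {B. nbhd_base x B}"
    unfolding nbhd_base_def by blast
  then obtain B where "B \<in> {B. nbhd_base x B}"
    and "\<And>B'. (B', B) \<in> inv_image ordLess card_of \<Longrightarrow> B' \<notin> {B. nbhd_base x B}"
    using wfE_min[OF wf_inv_image[OF wf_ordLess, where f = card_of]] by metis
  then have B: "nbhd_base x B"
    and B_min: "\<And>B'. (card_of B', card_of B) \<in> ordLess \<Longrightarrow> \<not> nbhd_base x B'"
    by auto
  have "card_le_character (f ` B) TYPE('a)" for f :: "'a set \<Rightarrow> 'b"
    unfolding card_le_character_def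
  proof (intro allI impI)
    fix K :: "'a set set"
    assume "\<forall>y::'a. \<exists>B'. nbhd_base y B' \<and> (card_of B', card_of K) \<in> ordLeq"
    then obtain B' where B': "nbhd_base x B'" "(card_of B', card_of K) \<in> ordLeq"
      by blast
    have "(card_of B, card_of B') \<in> ordLeq"
      using B_min[of B'] B'(1) ordLess_or_ordLeq[OF card_of_Well_order card_of_Well_order] by blast
    then show "(card_of (f ` B), card_of K) \<in> ordLeq"
      using card_of_image[of f B] B'(2) ordLeq_transitive by blast
  qed
  with B show ?thesis
    by blast
qed

section \<open>Topological semigroups with an open right unit\<close>

locale semigroup_open_right_unit =
  fixes e :: "'a::{topological_space,semigroup_mult}"
  assumes continuous_mult: "continuous_on UNIV (\<lambda>p::'a \<times> 'a. fst p * snd p)"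
    and right_unit: "\<And>x. x * e = x"
    and nbhd_translate: "\<And>V x. is_nbhd V e \<Longrightarrow> is_nbhd ((*) x ` V) x"
begin

lemma continuous_on_mult_left: "continuous_on UNIV ((*) (x::'a))"
proof -
  have "continuous_on UNIV (\<lambda>y::'a. (x, y))" by (intro continuous_intros)
  from continuous_on_compose2[OF continuous_mult this] show ?thesis by simp
qed

lemma continuous_on_mult_right: "continuous_on UNIV (\<lambda>y. y * (u::'a))"
proof -
  have "continuous_on UNIV (\<lambda>y::'a. (y, u))" by (intro continuous_intros)
  from continuous_on_compose2[OF continuous_mult this] show ?thesis by simp
qed

lemma exists_square_nbhd:
  assumes "open W" "e \<in> W"
  shows "\<exists>W'. open W' \<and> e \<in> W' \<and> (\<forall>a\<in>W'. \<forall>b\<in>W'. a * b \<in> W)"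
proof -
  have "open ((\<lambda>p. fst p * snd p) -` W)" "(e, e) \<in> (\<lambda>p. fst p * snd p) -` W"
    using open_vimage[OF assms(1) continuous_mult] assms(2) right_unit by auto
  then obtain A B where AB: "open A" "open B" "(e, e) \<in> A \<times> B"
      "A \<times> B \<subseteq> (\<lambda>p. fst p * snd p) -` W"
    by (rule open_prod_elim)
  then have "\<forall>a\<in>A \<inter> B. \<forall>b\<in>A \<inter> B. a * b \<in> W"
    by auto
  with AB(1-3) show ?thesis
    by (intro exI[of _ "A \<inter> B"]) auto
qed

lemma exists_cube_nbhd:
  assumes "open W" "e \<in> W"
  shows "\<exists>W'. open W' \<and> e \<in> W' \<and> W' \<subseteq> W \<and> (\<forall>a\<in>W'. \<forall>b\<in>W'. \<forall>c\<in>W'. a * b * c \<in> W)"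
proof -
  obtain W1 where W1: "open W1" "e \<in> W1" "\<forall>a\<in>W1. \<forall>b\<in>W1. a * b \<in> W"
    using exists_square_nbhd[OF assms] by blast
  obtain W2 where W2: "open W2" "e \<in> W2" "\<forall>a\<in>W2. \<forall>b\<in>W2. a * b \<in> W1"
    using exists_square_nbhd[OF W1(1,2)] by blast
  have "W2 \<subseteq> W1" "W1 \<subseteq> W"
    using W2(2,3) W1(2,3) right_unit by (metis subsetI)+
  with W1(3) W2 show ?thesis
    by (intro exI[of _ W2]) auto
qed

lemma exists_base_translate_subset:
  assumes "nbhd_base e B" "open W" "x \<in> W"
  shows "\<exists>V\<in>B. (*) x ` V \<subseteq> W"
proof -
  have "open {v. x * v \<in> W}"
    using open_vimage[OF \<open>open W\<close> continuous_on_mult_left[of x]] by (simp add: vimage_def)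
  then have "is_nbhd {v. x * v \<in> W} e"
    using \<open>x \<in> W\<close> right_unit unfolding is_nbhd_def by (intro exI[of _ "{v. x * v \<in> W}"]) simp
  then show ?thesis
    using assms(1) unfolding nbhd_base_def by blast
qed

lemma semiregular_exists_base_interior_closure_translate_subset:
  assumes "semiregular TYPE('a)" "nbhd_base e B" "open W" "x \<in> W"
  shows "\<exists>V\<in>B. interior (closure ((*) x ` V)) \<subseteq> W"
proof -
  have "is_nbhd W x"
    using assms(3,4) unfolding is_nbhd_def by blast
  then obtain N where "is_nbhd N x" "interior (closure N) \<subseteq> W"
    using assms(1) unfolding semiregular_def by blast
  then obtain N' where "open N'" "x \<in> N'" "N' \<subseteq> N"
    unfolding is_nbhd_def by blast
  then obtain V where "V \<in> B" "(*) x ` V \<subseteq> N'"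
    using exists_base_translate_subset[OF assms(2)] by blast
  then have "interior (closure ((*) x ` V)) \<subseteq> interior (closure N)"
    using \<open>N' \<subseteq> N\<close> by (intro interior_mono closure_mono) blast
  with \<open>V \<in> B\<close> \<open>interior (closure N) \<subseteq> W\<close> show ?thesis
    by blast
qed

end

section \<open>Weighted words over a neighbourhood sequence\<close>

lemma sum_list_split_half:
  fixes f :: "'b \<Rightarrow> real"
  assumes nonneg: "\<And>x. 0 \<le> f x" and "xs \<noteq> []"
  obtains as x bs where "xs = as @ x # bs"
    "sum_list (map f as) \<le> sum_list (map f xs) / 2" "sum_list (map f bs) \<le> sum_list (map f xs) / 2"
proof -
  let ?s = "\<lambda>ys. sum_list (map f ys)"
  have s_nonneg: "0 \<le> ?s ys" for ys
    using nonneg by (induction ys) (auto intro: add_nonneg_nonneg)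
  define J where "J = {j. j < length xs \<and> ?s (take j xs) \<le> ?s xs / 2}"
  define j where "j = Max J"
  have "finite J" "0 \<in> J"
    using \<open>xs \<noteq> []\<close> s_nonneg[of xs] by (auto simp: J_def)
  then have "j \<in> J" and j_max: "\<And>i. i \<in> J \<Longrightarrow> i \<le> j"
    unfolding j_def by (auto intro: Max_in)
  then have j: "j < length xs" "?s (take j xs) \<le> ?s xs / 2"
    by (auto simp: J_def)
  have "?s (drop (Suc j) xs) \<le> ?s xs / 2"
  proof (cases "Suc j < length xs")
    case True
    then have "?s xs / 2 < ?s (take (Suc j) xs)"
      using j_max[of "Suc j"] by (force simp: J_def)
    moreover have "?s xs = ?s (take (Suc j) xs) + ?s (drop (Suc j) xs)"
      by (metis append_take_drop_id map_append sum_list_append)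
    ultimately show ?thesis by linarith
  next
    case False
    then show ?thesis using s_nonneg[of xs] by simp
  qed
  with j show thesis
    using that[of "take j xs" "xs ! j" "drop (Suc j) xs"] id_take_nth_drop[OF j(1)] by blast
qed

definition weight :: "nat list \<Rightarrow> real" where
  "weight ns = (\<Sum>n\<leftarrow>ns. (1/2) ^ n)"

lemma weight_simps [simp]:
  "weight [] = 0" "weight (n # ns) = (1/2) ^ n + weight ns" "weight (ns @ ms) = weight ns + weight ms"
  by (simp_all add: weight_def)

lemma weight_nonneg: "0 \<le> weight ns"
  by (induction ns) auto

locale nbhd_sequence = semigroup_open_right_unit e for e :: "'a::{topological_space,semigroup_mult}" +
  fixes U :: "nat \<Rightarrow> 'a set"
  assumes open_U: "open (U n)" and e_in_U: "e \<in> U n"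
    and cube_U: "a \<in> U (Suc n) \<Longrightarrow> b \<in> U (Suc n) \<Longrightarrow> c \<in> U (Suc n) \<Longrightarrow> a * b * c \<in> U n"
begin

lemma U_antimono: "n \<le> m \<Longrightarrow> U m \<subseteq> U n"
proof (rule lift_Suc_antimono_le[of U])
  show "U (Suc k) \<subseteq> U k" for k
    using cube_U[OF _ e_in_U e_in_U] by (auto simp: right_unit)
qed

lemma is_nbhd_translate_U: "is_nbhd ((*) x ` U n) x"
proof (rule nbhd_translate)
  show "is_nbhd (U n) e"
    using open_U e_in_U unfolding is_nbhd_def by blast
qed

lemma open_sublevel_if_translation_bounded:
  fixes g :: "'a \<Rightarrow> real"
  assumes bounded: "\<And>n y u. u \<in> U n \<Longrightarrow> g (y * u) \<le> g y + (1/2) ^ n"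
  shows "open {y. g y < a}"
proof (subst open_subopen, intro ballI)
  fix y assume "y \<in> {y. g y < a}"
  then obtain n where n: "(1/2) ^ n < a - g y"
    using real_arch_pow_inv[of "a - g y" "1/2"] by auto
  obtain S where S: "open S" "y \<in> S" "S \<subseteq> (*) y ` U n"
    using is_nbhd_translate_U unfolding is_nbhd_def by blast
  have "g w < a" if w: "w \<in> S" for w
  proof -
    obtain u where "u \<in> U n" "w = y * u"
      using S(3) w by blast
    then show ?thesis
      using bounded[of u n y] n by simp
  qed
  then have "S \<subseteq> {y. g y < a}"
    by blast
  with S(1,2) show "\<exists>T. open T \<and> y \<in> T \<and> T \<subseteq> {y. g y < a}"
    by blast
qed

lemma closure_dist_translation_bounded:
  assumes le_one: "\<And>x y. d x y \<le> 1" and "A \<noteq> {}"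
    and bounded: "\<And>n x y u. u \<in> U n \<Longrightarrow> d x (y * u) \<le> d x y + (1/2) ^ n"
    and u: "u \<in> U n"
  shows "closure_dist d A (y * u) \<le> closure_dist d A y + (1/2) ^ n"
proof -
  define Q where "Q y = {r. 0 < r \<and> y \<in> closure (qball_set d A r)}" for y
  have le: "Inf (Q (y * u)) \<le> r + (1/2) ^ n" if r: "r \<in> Q y" for r
  proof -
    have "(\<lambda>w. w * u) ` qball_set d A r \<subseteq> qball_set d A (r + (1/2) ^ n)"
    proof
      fix w assume "w \<in> (\<lambda>w. w * u) ` qball_set d A r"
      then obtain b a where "w = b * u" "a \<in> A" "d a b < r"
        unfolding qball_set_def by blast
      then show "w \<in> qball_set d A (r + (1/2) ^ n)"
        using bounded[OF u, of a b] unfolding qball_set_def by (auto intro!: bexI[of _ a])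
    qed
    then have "closure ((\<lambda>w. w * u) ` qball_set d A r) \<subseteq> closure (qball_set d A (r + (1/2) ^ n))"
      by (rule closure_mono)
    moreover have "y * u \<in> closure ((\<lambda>w. w * u) ` qball_set d A r)"
      using r continuous_image_closure_subset[OF continuous_on_mult_right, of u "qball_set d A r"]
      unfolding Q_def by blast
    ultimately have "r + (1/2) ^ n \<in> Q (y * u)"
      using r unfolding Q_def by (auto intro: add_pos_nonneg)
    then show ?thesis
      by (rule cInf_lower) (auto simp: Q_def intro: bdd_belowI[of _ 0])
  qed
  have "Q y \<noteq> {}"
    using exists_radius_closure_qball_set[where d=d, OF le_one \<open>A \<noteq> {}\<close>] unfolding Q_def by blast
  then have "Inf (Q (y * u)) - (1/2) ^ n \<le> Inf (Q y)"
    using le by (intro cInf_greatest) (simp_all add: diff_le_eq)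
  then show ?thesis
    unfolding closure_dist_def Q_def by linarith
qed

lemma continuous_on_closure_dist:
  assumes le_one: "\<And>x y. d x y \<le> 1" and "A \<noteq> {}"
    and bounded: "\<And>n x y u. u \<in> U n \<Longrightarrow> d x (y * u) \<le> d x y + (1/2) ^ n"
  shows "continuous_on UNIV (closure_dist d A)"
  unfolding continuous_on_UNIV_iff_open_level_sets
proof (intro allI conjI)
  fix a
  show "open {y. a < closure_dist d A y}"
    unfolding closure_dist_def
  proof (rule open_superlevel_Inf_closed_family)
    show "closure (qball_set d A r) \<subseteq> closure (qball_set d A s)" if "r \<le> s" for r s
      using that by (intro closure_mono qball_set_mono)
    show "\<exists>r>0. y \<in> closure (qball_set d A r)" for y
      by (rule exists_radius_closure_qball_set[where d=d, OF le_one \<open>A \<noteq> {}\<close>])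
  qed simp
  show "open {y. closure_dist d A y < a}"
    using closure_dist_translation_bounded[OF assms] by (rule open_sublevel_if_translation_bounded)
qed

fun reach :: "'a \<Rightarrow> nat list \<Rightarrow> 'a set" where
  "reach x [] = {x}"
| "reach x (n # ns) = (\<Union>u\<in>U n. reach (x * u) ns)"

lemma reach_append: "reach x (ns @ ms) = (\<Union>y\<in>reach x ns. reach y ms)"
  by (induction ns arbitrary: x) auto

lemma reach_mult_left: "reach (z * x) ns = (*) z ` reach x ns"
  by (induction ns arbitrary: x) (auto simp: mult.assoc image_UN)

lemma reach_closure: "y \<in> closure T \<Longrightarrow> reach y ns \<subseteq> closure (\<Union>w\<in>T. reach w ns)"
proof (induction ns arbitrary: y T)
  case Nil
  then show ?case by simp
next
  case (Cons n ns)
  show ?case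
  proof
    fix z assume "z \<in> reach y (n # ns)"
    then obtain u where u: "u \<in> U n" "z \<in> reach (y * u) ns" by auto
    have "y * u \<in> closure ((\<lambda>w. w * u) ` T)"
      using continuous_image_closure_subset[OF continuous_on_mult_right] Cons.prems by blast
    then have "z \<in> closure (\<Union>w\<in>(\<lambda>w. w * u) ` T. reach w ns)"
      using Cons.IH u(2) by blast
    moreover have "(\<Union>w\<in>(\<lambda>w. w * u) ` T. reach w ns) \<subseteq> (\<Union>w\<in>T. reach w (n # ns))"
      using u(1) by auto
    ultimately show "z \<in> closure (\<Union>w\<in>T. reach w (n # ns))"
      using closure_mono by blast
  qed
qed

text \<open>The Birkhoff--Kakutani estimate: split a word at half its weight and apply
  the cube condition to the two halves and the middle letter.\<close>
lemma reach_subset_translate_U: "weight ns \<le> (1/2) ^ Suc m \<Longrightarrow> reach x ns \<subseteq> (*) x ` U m"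
proof (induction "length ns" arbitrary: ns m x rule: less_induct)
  case less
  show ?case
  proof (cases "ns = []")
    case True
    then show ?thesis using e_in_U right_unit by (auto intro: image_eqI[of x _ e])
  next
    case False
    obtain as n bs where split: "ns = as @ n # bs"
      and "weight as \<le> weight ns / 2" "weight bs \<le> weight ns / 2"
      using sum_list_split_half[of "\<lambda>n. (1/2::real) ^ n" ns] False unfolding weight_def by auto
    then have halves: "weight as \<le> (1/2) ^ Suc (Suc m)" "weight bs \<le> (1/2) ^ Suc (Suc m)"
      using less.prems by auto
    have "(1/2::real) ^ n \<le> (1/2) ^ Suc m"
      using less.prems split weight_nonneg[of as] weight_nonneg[of bs] by simp
    then have "U n \<subseteq> U (Suc m)"
      by (intro U_antimono) (subst (asm) power_decreasing_iff, auto)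
    show ?thesis
    proof
      fix y assume "y \<in> reach x ns"
      then obtain v t where v: "v \<in> reach x as" and t: "t \<in> U n" and y: "y \<in> reach (v * t) bs"
        by (auto simp: split reach_append)
      obtain a where a: "a \<in> U (Suc m)" "v = x * a"
        using less.hyps[of as, OF _ halves(1)] v split by fastforce
      obtain b where b: "b \<in> U (Suc m)" "y = v * t * b"
        using less.hyps[of bs, OF _ halves(2)] y split by fastforce
      have "a * t * b \<in> U m"
        using cube_U a(1) b(1) t \<open>U n \<subseteq> U (Suc m)\<close> by blast
      then show "y \<in> (*) x ` U m"
        using a(2) b(2) by (auto simp: mult.assoc)
    qed
  qed
qed

definition wball :: "'a \<Rightarrow> real \<Rightarrow> 'a set" where
  "wball x r = (\<Union>ns\<in>{ns. weight ns \<le> r}. reach x ns)"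

lemma wball_mono: "r \<le> s \<Longrightarrow> wball x r \<subseteq> wball x s"
  unfolding wball_def by (blast intro: order_trans)

lemma self_in_wball: "0 \<le> r \<Longrightarrow> x \<in> wball x r"
  unfolding wball_def by (rule UN_I[of "[]"]) auto

lemma translate_in_wball: "u \<in> U n \<Longrightarrow> x * u \<in> wball x ((1/2) ^ n)"
  unfolding wball_def by (rule UN_I[of "[n]"]) auto

lemma wball_trans:
  assumes "y \<in> wball x r" "z \<in> wball y s"
  shows "z \<in> wball x (r + s)"
proof -
  obtain ns ms where "weight ns \<le> r" "y \<in> reach x ns" "weight ms \<le> s" "z \<in> reach y ms"
    using assms unfolding wball_def by auto
  then have "weight (ns @ ms) \<le> r + s" "z \<in> reach x (ns @ ms)"
    by (auto simp: reach_append)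
  then show ?thesis
    unfolding wball_def by blast
qed

lemma wball_mult_left: "y \<in> wball x r \<Longrightarrow> z * y \<in> wball (z * x) r"
  unfolding wball_def by (auto simp: reach_mult_left)

lemma wball_subset_translate_U: "wball x ((1/2) ^ Suc m) \<subseteq> (*) x ` U m"
  unfolding wball_def using reach_subset_translate_U by blast

lemma closure_wball_trans:
  assumes "y \<in> closure (wball x r)"
  shows "wball y s \<subseteq> closure (wball x (r + s))"
proof
  fix z assume "z \<in> wball y s"
  then obtain ns where ns: "weight ns \<le> s" "z \<in> reach y ns"
    unfolding wball_def by auto
  have "(\<Union>w\<in>wball x r. reach w ns) \<subseteq> wball x (r + s)"
    using ns(1) wball_trans unfolding wball_def by blast
  then show "z \<in> closure (wball x (r + s))"
    using reach_closure[OF assms] ns(2) closure_mono by blast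
qed

end

section \<open>The quasi-pseudometrics\<close>

text \<open>Instantiated with cl = id, and with cl = closure for the semiregular case.\<close>
locale wball_hull = nbhd_sequence e U for e :: "'a::{topological_space,semigroup_mult}" and U +
  fixes cl :: "'a set \<Rightarrow> 'a set"
  assumes subset_cl: "T \<subseteq> cl T"
    and cl_mono: "S \<subseteq> T \<Longrightarrow> cl S \<subseteq> cl T"
    and cl_wball_trans: "y \<in> cl (wball x r) \<Longrightarrow> z \<in> cl (wball y s) \<Longrightarrow> z \<in> cl (wball x (r + s))"
    and cl_wball_mult_left: "y \<in> cl (wball x r) \<Longrightarrow> z * y \<in> cl (wball (z * x) r)"
begin

text \<open>The radii are truncated at 1 so that the infimum is never taken over the empty set.\<close>
definition radii :: "'a \<Rightarrow> 'a \<Rightarrow> real set" where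
  "radii x y = {r. 0 < r \<and> (1 \<le> r \<or> y \<in> cl (wball x r))}"

definition qdist :: "'a \<Rightarrow> 'a \<Rightarrow> real" where
  "qdist x y = Inf (radii x y)"

lemma radii_mono: "r \<in> radii x y \<Longrightarrow> r \<le> s \<Longrightarrow> s \<in> radii x y"
  unfolding radii_def using cl_mono[OF wball_mono] by fastforce

lemma one_in_radii: "1 \<in> radii x y"
  unfolding radii_def by simp

lemma bdd_below_radii: "bdd_below (radii x y)"
  unfolding radii_def by (rule bdd_belowI[of _ 0]) auto

lemma qdist_le: "r \<in> radii x y \<Longrightarrow> qdist x y \<le> r"
  unfolding qdist_def by (rule cInf_lower[OF _ bdd_below_radii])

lemma qdist_nonneg: "0 \<le> qdist x y"
  unfolding qdist_def
proof (rule cInf_greatest)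
  show "radii x y \<noteq> {}"
    using one_in_radii by blast
qed (simp add: radii_def)

lemma qdist_le_one: "qdist x y \<le> 1"
  using one_in_radii by (rule qdist_le)

lemma radii_if_qdist_less: "qdist x y < r \<Longrightarrow> r \<in> radii x y"
proof -
  assume "qdist x y < r"
  then obtain r' where "r' \<in> radii x y" "r' < r"
    unfolding qdist_def using cInf_lessD[of "radii x y"] one_in_radii by blast
  then show ?thesis
    using radii_mono by simp
qed

lemma qdist_self: "qdist x x = 0"
proof -
  have "qdist x x \<le> r" if "0 < r" for r
    using that subset_cl self_in_wball[of r x] by (intro qdist_le) (auto simp: radii_def)
  then have "qdist x x \<le> 0"
    using field_le_epsilon[of "qdist x x" 0] by simp
  then show ?thesis
    using qdist_nonneg[of x x] by simp
qed

lemma radii_add: "r \<in> radii x y \<Longrightarrow> s \<in> radii y z \<Longrightarrow> r + s \<in> radii x z"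
  using cl_wball_trans[of y x r z s] unfolding radii_def by auto

lemma qdist_triangle: "qdist x z \<le> qdist x y + qdist y z"
proof (rule field_le_epsilon)
  fix \<epsilon> :: real assume "0 < \<epsilon>"
  then have "qdist x y + \<epsilon>/2 \<in> radii x y" "qdist y z + \<epsilon>/2 \<in> radii y z"
    by (auto intro: radii_if_qdist_less)
  then have "(qdist x y + \<epsilon>/2) + (qdist y z + \<epsilon>/2) \<in> radii x z"
    by (rule radii_add)
  then show "qdist x z \<le> qdist x y + qdist y z + \<epsilon>"
    using qdist_le by fastforce
qed

lemma qdist_mult_left: "qdist (z * x) (z * y) \<le> qdist x y"
proof -
  have "radii x y \<noteq> {}"
    using one_in_radii by blast
  moreover have "radii x y \<subseteq> radii (z * x) (z * y)"
    unfolding radii_def using cl_wball_mult_left by auto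
  ultimately show ?thesis
    unfolding qdist_def by (rule cInf_superset_mono[OF _ bdd_below_radii])
qed

lemma qdist_mult_right_le: "u \<in> U n \<Longrightarrow> qdist x (y * u) \<le> qdist x y + (1/2) ^ n"
proof -
  assume "u \<in> U n"
  then have "y * u \<in> cl (wball y ((1/2) ^ n))"
    using translate_in_wball subset_cl by blast
  then have "qdist y (y * u) \<le> (1/2) ^ n"
    by (intro qdist_le) (simp add: radii_def)
  then show ?thesis
    using qdist_triangle[of x "y * u" y] by linarith
qed

lemma qdist_less_half: "qdist x y < 1/2 \<Longrightarrow> y \<in> cl ((*) x ` U 0)"
  using radii_if_qdist_less[of x y "1/2"] cl_mono[OF wball_subset_translate_U[of x 0]]
  by (auto simp: radii_def)

lemma open_qball_qdist: "open (qball qdist x r)"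
  unfolding qball_def using qdist_mult_right_le by (rule open_sublevel_if_translation_bounded)

lemma quasi_pseudometric_qdist: "quasi_pseudometric qdist"
  unfolding quasi_pseudometric_def using qdist_nonneg qdist_self qdist_triangle by blast

lemma left_subinvariant_qdist: "left_subinvariant qdist"
  unfolding left_subinvariant_def using qdist_mult_left by blast

lemma closure_dist_continuous_qdist: "closure_dist_continuous qdist"
  unfolding closure_dist_continuous_def
  using continuous_on_closure_dist[where d=qdist, OF qdist_le_one _ qdist_mult_right_le] by blast

end

context nbhd_sequence
begin

sublocale id_hull: wball_hull e U id
  by unfold_locales (auto intro: wball_trans wball_mult_left)

sublocale closure_hull: wball_hull e U closure
proof
  show "z \<in> closure (wball x (r + s))" if "y \<in> closure (wball x r)" "z \<in> closure (wball y s)" for x y z r s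
    using that closure_minimal[OF closure_wball_trans[OF that(1)] closed_closure] by blast
  show "z * y \<in> closure (wball (z * x) r)" if "y \<in> closure (wball x r)" for x y z r
  proof -
    have "(*) z ` wball x r \<subseteq> wball (z * x) r"
      using wball_mult_left by blast
    then show ?thesis
      using that continuous_image_closure_subset[OF continuous_on_mult_left, of z "wball x r"]
        closure_mono by blast
  qed
qed (use closure_subset closure_mono in blast)+

lemma right_continuous_closure_qdist: "right_continuous closure_hull.qdist"
  unfolding right_continuous_def continuous_on_UNIV_iff_open_level_sets
proof (intro allI conjI)
  fix x a
  define C where "C r = {y. 1 \<le> r \<or> y \<in> closure (wball x r)}" for r
  have "closure_hull.qdist x y = Inf {r. 0 < r \<and> y \<in> C r}" for y
    unfolding closure_hull.qdist_def closure_hull.radii_def C_def by simp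
  moreover have "open {y. a < Inf {r. 0 < r \<and> y \<in> C r}}"
  proof (rule open_superlevel_Inf_closed_family)
    show "closed (C r)" for r
      by (cases "1 \<le> r") (simp_all add: C_def)
    show "C r \<subseteq> C s" if "r \<le> s" for r s
      using that closure_mono[OF wball_mono[OF that]] by (auto simp: C_def)
    show "\<exists>r>0. y \<in> C r" for y
      by (auto simp: C_def intro: exI[of _ 1])
  qed
  ultimately show "open {y. a < closure_hull.qdist x y}"
    by simp
  show "open {y. closure_hull.qdist x y < a}"
    using closure_hull.qdist_mult_right_le by (rule open_sublevel_if_translation_bounded)
qed

end

context semigroup_open_right_unit
begin

lemma exists_nbhd_sequence:
  assumes "is_nbhd V e"
  obtains U where "nbhd_sequence e U" "U 0 \<subseteq> V"
proof -
  define P where "P n W \<longleftrightarrow> open W \<and> e \<in> W \<and> W \<subseteq> V" for n :: nat and W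
  define Q where "Q n W W' \<longleftrightarrow> (\<forall>a\<in>W'. \<forall>b\<in>W'. \<forall>c\<in>W'. a * b * c \<in> W)" for n :: nat and W W' :: "'a set"
  have "\<exists>W. P 0 W"
    using assms by (auto simp: P_def is_nbhd_def)
  moreover have "\<exists>W'. P (Suc n) W' \<and> Q n W W'" if "P n W" for n W
    using that exists_cube_nbhd[of W] unfolding P_def Q_def by (meson order_trans)
  ultimately obtain U where U: "\<And>n. P n (U n) \<and> Q n (U n) (U (Suc n))"
    using dependent_nat_choice[of P Q] by blast
  have "nbhd_sequence e U"
    by unfold_locales (use U in \<open>auto simp: P_def Q_def\<close>)
  then show thesis
    using U that unfolding P_def by blast
qed

lemma exists_quasi_pseudometric_small_ball:
  assumes "is_nbhd V e"
  shows "\<exists>d. quasi_pseudometric d \<and> left_subinvariant d \<and> closure_dist_continuous d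
    \<and> (\<forall>x r. open (qball d x r)) \<and> (\<forall>x. qball d x (1/2) \<subseteq> (*) x ` V)"
proof -
  obtain U where "nbhd_sequence e U" "U 0 \<subseteq> V"
    using exists_nbhd_sequence[OF assms] by blast
  then interpret nbhd_sequence e U
    by simp
  have "qball id_hull.qdist x (1/2) \<subseteq> (*) x ` V" for x
    using id_hull.qdist_less_half \<open>U 0 \<subseteq> V\<close> by (fastforce simp: qball_def)
  then show ?thesis
    using id_hull.quasi_pseudometric_qdist id_hull.left_subinvariant_qdist
      id_hull.closure_dist_continuous_qdist id_hull.open_qball_qdist by blast
qed

lemma exists_right_continuous_quasi_pseudometric_small_ball:
  assumes "is_nbhd V e"
  shows "\<exists>d. quasi_pseudometric d \<and> left_subinvariant d \<and> closure_dist_continuous d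
    \<and> right_continuous d \<and> (\<forall>x r. open (qball d x r)) \<and> (\<forall>x. qball d x (1/2) \<subseteq> closure ((*) x ` V))"
proof -
  obtain U where "nbhd_sequence e U" "U 0 \<subseteq> V"
    using exists_nbhd_sequence[OF assms] by blast
  then interpret nbhd_sequence e U
    by simp
  have "closure ((*) x ` U 0) \<subseteq> closure ((*) x ` V)" for x
    using \<open>U 0 \<subseteq> V\<close> by (intro closure_mono) blast
  then have "qball closure_hull.qdist x (1/2) \<subseteq> closure ((*) x ` V)" for x
    using closure_hull.qdist_less_half by (fastforce simp: qball_def)
  then show ?thesis
    using closure_hull.quasi_pseudometric_qdist closure_hull.left_subinvariant_qdist
      closure_hull.closure_dist_continuous_qdist right_continuous_closure_qdist
      closure_hull.open_qball_qdist by blast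
qed

lemma exists_generating_quasi_pseudometric_family:
  assumes base: "nbhd_base e B"
    and card: "\<And>f :: 'a set \<Rightarrow> 'a \<Rightarrow> 'a \<Rightarrow> real. card_le_character (f ` B) TYPE('a)"
  shows "\<exists>D :: ('a \<Rightarrow> 'a \<Rightarrow> real) set.
    (\<forall>d\<in>D. quasi_pseudometric d \<and> left_subinvariant d \<and> closure_dist_continuous d)
    \<and> generates_topology D \<and> card_le_character D TYPE('a)"
proof -
  have "\<forall>V\<in>B. \<exists>d. quasi_pseudometric d \<and> left_subinvariant d \<and> closure_dist_continuous d
    \<and> (\<forall>x r. open (qball d x r)) \<and> (\<forall>x. qball d x (1/2) \<subseteq> (*) x ` V)"
    using base exists_quasi_pseudometric_small_ball unfolding nbhd_base_def by blast
  then obtain d where d: "\<And>V. V \<in> B \<Longrightarrow> quasi_pseudometric (d V) \<and> left_subinvariant (d V)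
    \<and> closure_dist_continuous (d V) \<and> (\<forall>x r. open (qball (d V) x r)) \<and> (\<forall>x. qball (d V) x (1/2) \<subseteq> (*) x ` V)"
    by metis
  have "generates_topology (d ` B)"
  proof (rule generates_topologyI)
    show "open (qball d' x r)" "d' x x = 0" if "d' \<in> d ` B" for d' x r
      using that d unfolding quasi_pseudometric_def by auto
    show "\<exists>d'\<in>d ` B. \<exists>r>0. qball d' x r \<subseteq> W" if W: "open W" "x \<in> W" for x W
    proof -
      obtain V where "V \<in> B" "(*) x ` V \<subseteq> W"
        using exists_base_translate_subset[OF base W] by blast
      moreover from this have "qball (d V) x (1/2) \<subseteq> W"
        using d[of V] by blast
      ultimately show ?thesis
        by (intro bexI[of _ "d V"] exI[of _ "1/2"]) auto
    qed
  qed
  with d card[of d] show ?thesis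
    by (intro exI[of _ "d ` B"]) auto
qed

lemma exists_generating_right_continuous_quasi_pseudometric_family:
  assumes "semiregular TYPE('a)" and base: "nbhd_base e B"
    and card: "\<And>f :: 'a set \<Rightarrow> 'a \<Rightarrow> 'a \<Rightarrow> real. card_le_character (f ` B) TYPE('a)"
  shows "\<exists>D :: ('a \<Rightarrow> 'a \<Rightarrow> real) set.
    (\<forall>d\<in>D. quasi_pseudometric d \<and> left_subinvariant d \<and> closure_dist_continuous d \<and> right_continuous d)
    \<and> generates_topology D \<and> card_le_character D TYPE('a)"
proof -
  have "\<forall>V\<in>B. \<exists>d. quasi_pseudometric d \<and> left_subinvariant d \<and> closure_dist_continuous d
    \<and> right_continuous d \<and> (\<forall>x r. open (qball d x r)) \<and> (\<forall>x. qball d x (1/2) \<subseteq> closure ((*) x ` V))"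
    using base exists_right_continuous_quasi_pseudometric_small_ball unfolding nbhd_base_def by blast
  then obtain d where d: "\<And>V. V \<in> B \<Longrightarrow> quasi_pseudometric (d V) \<and> left_subinvariant (d V)
    \<and> closure_dist_continuous (d V) \<and> right_continuous (d V) \<and> (\<forall>x r. open (qball (d V) x r))
    \<and> (\<forall>x. qball (d V) x (1/2) \<subseteq> closure ((*) x ` V))"
    by metis
  have "generates_topology (d ` B)"
  proof (rule generates_topologyI)
    show "open (qball d' x r)" "d' x x = 0" if "d' \<in> d ` B" for d' x r
      using that d unfolding quasi_pseudometric_def by auto
    show "\<exists>d'\<in>d ` B. \<exists>r>0. qball d' x r \<subseteq> W" if W: "open W" "x \<in> W" for x W
    proof -
      obtain V where "V \<in> B" "interior (closure ((*) x ` V)) \<subseteq> W"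
        using semiregular_exists_base_interior_closure_translate_subset[OF assms(1) base W] by blast
      moreover have "qball (d V) x (1/2) \<subseteq> interior (closure ((*) x ` V))"
        using d[OF \<open>V \<in> B\<close>] by (intro interior_maximal) auto
      ultimately show ?thesis
        by (intro bexI[of _ "d V"] exI[of _ "1/2"]) auto
    qed
  qed
  with d card[of d] show ?thesis
    by (intro exI[of _ "d ` B"]) auto
qed

end

theorem corollary6p2:
  fixes e :: "'a::{topological_space,semigroup_mult}"
  assumes "topological_semigroup TYPE('a)"
    and "open_right_unit e"
  shows "(\<exists>D :: ('a \<Rightarrow> 'a \<Rightarrow> real) set.
            (\<forall>d\<in>D. quasi_pseudometric d \<and> left_subinvariant d \<and> closure_dist_continuous d)
            \<and> generates_topology D \<and> card_le_character D TYPE('a))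
       \<and> (semiregular TYPE('a) \<longrightarrow>
           (\<exists>D :: ('a \<Rightarrow> 'a \<Rightarrow> real) set.
            (\<forall>d\<in>D. quasi_pseudometric d \<and> left_subinvariant d \<and> closure_dist_continuous d
                    \<and> right_continuous d)
            \<and> generates_topology D \<and> card_le_character D TYPE('a)))"
proof -
  interpret semigroup_open_right_unit e
    using assms unfolding topological_semigroup_def open_right_unit_def by unfold_locales auto
  obtain B where base: "nbhd_base e B"
    and card: "\<And>f :: 'a set \<Rightarrow> 'a \<Rightarrow> 'a \<Rightarrow> real. card_le_character (f ` B) TYPE('a)"
    using exists_nbhd_base_card_le_character[of e] by blast
  show ?thesis
    using exists_generating_quasi_pseudometric_family[OF base card]
      exists_generating_right_continuous_quasi_pseudometric_family[OF _ base card] by blast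
qed

end
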